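(* Let $\kappa$ be an infinite cardinal, $\alpha^*$ an ordinal, and $\bar A=\langle A_\alpha:\alpha<\alpha^*\rangle$ a sequence of subsets of $\kappa$ such that for each $\alpha<\alpha^*$, $A_\alpha$ does not belong to the ideal of subsets of $\kappa$ generated by $\{A_\beta:\beta<\alpha\}$. If $\mathrm{rk}_{\bar A}(\kappa)\ge\kappa^+$, then there is a sequence $\langle\alpha_n:n<\omega\rangle$ with $\alpha_n<\alpha_{n+1}<\kappa$ for all $n$, such that for every $\ell<k<\omega$ there is $\alpha<\alpha^*$ with $$A_\alpha\cap\{\alpha_\ell,\alpha_{\ell+1},\dots,\alpha_k\}=\{\alpha_{\ell+1},\dots,\alpha_k\}.$$
   Context: The rank $\mathrm{rk}_{\bar A}$ is the function from subsets of $\kappa$ to ordinals or $\infty$ defined by: $\mathrm{rk}_{\bar A}(A)\ge 0$ always, and $\mathrm{rk}_{\bar A}(A)\ge\zeta$ iff for every $\xi<\zeta$ there is $\alpha<\alpha^*$ such that $A\neq A\cap A_\alpha$ (i.e. $A\not\subseteq A_\alpha$) and $\mathrm{rk}_{\bar A}(A\cap A_\alpha)\ge\xi$. $\mathrm{rk}_{\bar A}(A)$ is the largest $\zeta$ with $\mathrm{rk}_{\bar A}(A)\ge\zeta$, or $\infty$ if it is $\ge\zeta$ for all ordinals $\zeta$. *)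

theory Defs
  imports Main
begin

text \<open>Ordinals are represented by well-order relations (as in HOL's BNF cardinal library).
  The index ordinal alpha* is a well-order s with index set Field s; the sequence is
  A :: 'i => 'k set.  An ordinal xi below the order type of a well-order W is represented
  by an element of Field W (the order type of its initial segment).\<close>

text \<open>rank_ge I A W X xi : rk(X) >= xi, where xi in Field W.\<close>
inductive rank_ge :: "'i set \<Rightarrow> ('i \<Rightarrow> 'k set) \<Rightarrow> 'o rel \<Rightarrow> 'k set \<Rightarrow> 'o \<Rightarrow> bool"
  for I A W where
  "\<lbrakk> \<xi> \<in> Field W;
     \<forall>\<eta>. (\<eta>, \<xi>) \<in> W \<and> \<eta> \<noteq> \<xi> \<longrightarrow>
        (\<exists>\<alpha>\<in>I. \<not> X \<subseteq> A \<alpha> \<and> rank_ge I A W (X \<inter> A \<alpha>) \<eta>) \<rbrakk>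
   \<Longrightarrow> rank_ge I A W X \<xi>"

definition rank_ge_otype :: "'i set \<Rightarrow> ('i \<Rightarrow> 'k set) \<Rightarrow> 'o rel \<Rightarrow> 'k set \<Rightarrow> bool" where
  "rank_ge_otype I A W X \<longleftrightarrow>
     (\<forall>\<xi>\<in>Field W. \<exists>\<alpha>\<in>I. \<not> X \<subseteq> A \<alpha> \<and> rank_ge I A W (X \<inter> A \<alpha>) \<xi>)"

definition in_gen_ideal :: "'k set \<Rightarrow> 'k set set \<Rightarrow> 'k set \<Rightarrow> bool" where
  "in_gen_ideal K F B \<longleftrightarrow> B \<subseteq> K \<and> (\<exists>G. finite G \<and> G \<subseteq> F \<and> B \<subseteq> \<Union>G)"

end

(*
  Call a finite sequence x_0, ..., x_(n-1) of points of kappa extendable if for every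
  xi < kappa^+ there is a set X of rank > xi such that each x_l lies outside some A_gamma
  containing all later x_j and all of X.  The empty sequence is extendable by the rank
  hypothesis.  To extend a sequence, pick for each xi such a set X_xi, an index alpha_xi with
  rk(X_xi \<inter> A_alpha_xi) >= xi and a point p_xi in X_xi - A_alpha_xi.  As kappa^+ is regular
  and there are only kappa points, a single point y equals p_xi for cofinally many xi;
  appending y, witnessed by the sets X_xi \<inter> A_alpha_xi, keeps the sequence extendable.
  Dependent choice gives an infinite sequence all of whose prefixes are extendable; it is
  injective, and any subsequence increasing in the well-order of kappa is as required.
*)
theory Submission
  imports Defs "HOL-Library.Infinite_Set"
begin

unbundle cardinal_syntax

lemma regularCard_cofinal_fiber:
  assumes W: "Card_order W" "regularCard W" "\<not> finite (Field W)"
    and B: "|B| <o W" and g: "g ` Field W \<subseteq> B"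
  shows "\<exists>y\<in>B. cofinal {\<xi> \<in> Field W. g \<xi> = y} W"
proof (rule ccontr)
  have wo: "wo_rel W" using W(1) by (simp add: card_order_on_well_order_on wo_rel_def)
  assume no_cofinal: "\<not> ?thesis"
  have "\<exists>c. c \<in> Field W \<and> (\<forall>\<xi>\<in>Field W. g \<xi> = y \<longrightarrow> (\<xi>, c) \<in> W)" if y: "y \<in> B" for y
  proof -
    obtain c where c: "c \<in> Field W" "\<And>\<xi>. \<xi> \<in> Field W \<Longrightarrow> g \<xi> = y \<Longrightarrow> \<not> (c \<noteq> \<xi> \<and> (c, \<xi>) \<in> W)"
      using no_cofinal y unfolding cofinal_def by auto
    have "(\<xi>, c) \<in> W" if "\<xi> \<in> Field W" "g \<xi> = y" for \<xi>
      using c that by (intro wo_rel.in_notinI[OF wo]) auto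
    with c(1) show ?thesis by blast
  qed
  then obtain bound where bound: "\<And>y. y \<in> B \<Longrightarrow> bound y \<in> Field W"
    "\<And>y \<xi>. y \<in> B \<Longrightarrow> \<xi> \<in> Field W \<Longrightarrow> g \<xi> = y \<Longrightarrow> (\<xi>, bound y) \<in> W"
    by (metis (lifting))
  have "\<not> cofinal (bound ` B) W"
  proof
    assume "cofinal (bound ` B) W"
    then have "|bound ` B| =o W" using W(2) bound(1) unfolding regularCard_def by blast
    moreover have "|bound ` B| <o W" using card_of_image B by (rule ordLeq_ordLess_trans)
    ultimately show False using not_ordLess_ordIso by blast
  qed
  then obtain c where c: "c \<in> Field W" "\<And>y. y \<in> B \<Longrightarrow> \<not> (c \<noteq> bound y \<and> (c, bound y) \<in> W)"
    unfolding cofinal_def by auto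
  have below_c: "(bound y, c) \<in> W" if "y \<in> B" for y
    using c bound(1) that by (intro wo_rel.in_notinI[OF wo]) auto
  have "\<not> Field W \<subseteq> under W c"
    using Card_order_infinite_not_under[OF W(1,3)] under_Field[of W c] by blast
  then obtain \<xi> where \<xi>: "\<xi> \<in> Field W" "(\<xi>, c) \<notin> W"
    unfolding under_def by blast
  have "(\<xi>, bound (g \<xi>)) \<in> W" "(bound (g \<xi>), c) \<in> W"
    using bound(2) below_c g \<xi>(1) by auto
  with \<xi>(2) show False using wo_rel.TRANS[OF wo] unfolding trans_def by blast
qed

lemma cardSuc_cofinal_fiber:
  assumes r: "Card_order r" "\<not> finite (Field r)"
    and g: "g ` Field (cardSuc r) \<subseteq> Field r"
  shows "\<exists>y\<in>Field r. cofinal {\<xi> \<in> Field (cardSuc r). g \<xi> = y} (cardSuc r)"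
proof (rule regularCard_cofinal_fiber[OF _ _ _ _ g])
  show "Card_order (cardSuc r)" using r(1) by (rule cardSuc_Card_order)
  show "regularCard (cardSuc r)" using r(2,1) by (rule infinite_cardSuc_regularCard)
  show "\<not> finite (Field (cardSuc r))" using r by (simp add: cardSuc_finite)
  show "|Field r| <o cardSuc r"
    using card_of_Field_ordIso[OF r(1)] cardSuc_greater[OF r(1)] by (rule ordIso_ordLess_trans)
qed

lemma dependent_snoc_choice:
  assumes "P []" and "\<And>xs. P xs \<Longrightarrow> \<exists>y. P (xs @ [y])"
  shows "\<exists>a. \<forall>n. P (map a [0..<n])"
proof -
  have "\<exists>f. \<forall>n. (P (f n) \<and> length (f n) = n) \<and> (\<exists>y. f (Suc n) = f n @ [y])"
  proof (rule dependent_nat_choice)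
    show "\<exists>xs. P xs \<and> length xs = 0" using assms(1) by simp
  next
    fix xs n assume xs: "P xs \<and> length xs = n"
    then obtain y where "P (xs @ [y])" using assms(2) by blast
    with xs show "\<exists>ys. (P ys \<and> length ys = Suc n) \<and> (\<exists>y. ys = xs @ [y])" by auto
  qed
  then obtain f where f: "\<And>n. P (f n)" "\<And>n. length (f n) = n" "\<And>n. \<exists>y. f (Suc n) = f n @ [y]"
    by blast
  have "map (\<lambda>i. f (Suc i) ! i) [0..<n] = f n" for n
  proof (induction n)
    case 0
    show ?case using f(2)[of 0] by simp
  next
    case (Suc n)
    obtain y where "f (Suc n) = f n @ [y]" using f(3) by blast
    with Suc.IH f(2)[of n] show ?case by (simp add: nth_append)
  qed
  then have "P (map (\<lambda>i. f (Suc i) ! i) [0..<n])" for n using f(1) by simp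
  then show ?thesis by blast
qed

lemma Well_order_monotone_subseq:
  fixes x :: "nat \<Rightarrow> 'a"
  assumes r: "Well_order r" and x: "range x \<subseteq> Field r"
  shows "\<exists>f. strict_mono f \<and> (\<forall>n. (x (f n), x (f (Suc n))) \<in> r)"
proof -
  have wo: "wo_rel r" using r by (simp add: wo_rel_def)
  define S where "S = {m. \<forall>m'\<ge>m. (x m, x m') \<in> r}"
  have unbounded: "\<exists>m\<ge>j. m \<in> S" for j
  proof -
    have sub: "x ` {j..} \<subseteq> Field r" using x by auto
    have "wo_rel.minim r (x ` {j..}) \<in> x ` {j..}"
      by (rule wo_rel.minim_in[OF wo sub]) auto
    then obtain m where m: "wo_rel.minim r (x ` {j..}) = x m" "j \<le> m"
      by (auto simp: image_iff)
    have "(x m, x m') \<in> r" if "m \<le> m'" for m'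
      using wo_rel.minim_least[OF wo sub, of "x m'"] m that by simp
    then have "m \<in> S" unfolding S_def by blast
    with m(2) show ?thesis by blast
  qed
  have "infinite S" unfolding infinite_nat_iff_unbounded_le using unbounded by blast
  then obtain f :: "nat \<Rightarrow> nat" where f: "strict_mono f" "\<And>n. f n \<in> S"
    using infinite_enumerate by blast
  have "(x (f n), x (f (Suc n))) \<in> r" for n
  proof -
    have "f n \<le> f (Suc n)" using strict_mono_less_eq[OF f(1), of n "Suc n"] by simp
    then show ?thesis using f(2)[of n] unfolding S_def by blast
  qed
  with f(1) show ?thesis by blast
qed

text \<open>Rank strictly above \<xi>, i.e. at least \<xi> + 1; the successor of \<xi> need not be a
  point of \<open>Field W\<close>, so it is expressed by unfolding one step of \<open>rank_ge\<close>.\<close>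

definition rank_gt :: "'i set \<Rightarrow> ('i \<Rightarrow> 'k set) \<Rightarrow> 'o rel \<Rightarrow> 'k set \<Rightarrow> 'o \<Rightarrow> bool" where
  "rank_gt I A W X \<xi> \<longleftrightarrow> (\<exists>\<alpha>\<in>I. \<not> X \<subseteq> A \<alpha> \<and> rank_ge I A W (X \<inter> A \<alpha>) \<xi>)"

lemma rank_ge_imp_rank_gt:
  assumes "rank_ge I A W X \<xi>" "(\<eta>, \<xi>) \<in> W" "\<eta> \<noteq> \<xi>"
  shows "rank_gt I A W X \<eta>"
  using assms(1)
proof (cases rule: rank_ge.cases)
  case 1
  with assms(2,3) show ?thesis unfolding rank_gt_def by blast
qed

lemma rank_gt_pigeonhole:
  fixes r :: "'k rel"
  assumes r: "Card_order r" "\<not> finite (Field r)"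
    and X: "\<And>\<xi>. \<xi> \<in> Field (cardSuc r) \<Longrightarrow> X \<xi> \<subseteq> Field r \<and> rank_gt I A (cardSuc r) (X \<xi>) \<xi>"
  shows "\<exists>y\<in>Field r. \<forall>\<eta>\<in>Field (cardSuc r). \<exists>\<xi>\<in>Field (cardSuc r). \<exists>\<alpha>\<in>I.
           y \<in> X \<xi> \<and> y \<notin> A \<alpha> \<and> rank_gt I A (cardSuc r) (X \<xi> \<inter> A \<alpha>) \<eta>"
proof -
  let ?W = "cardSuc r"
  have "\<forall>\<xi>\<in>Field ?W. \<exists>\<alpha>. \<alpha> \<in> I \<and> \<not> X \<xi> \<subseteq> A \<alpha> \<and> rank_ge I A ?W (X \<xi> \<inter> A \<alpha>) \<xi>"
    using X unfolding rank_gt_def by blast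
  then obtain \<alpha> where \<alpha>: "\<forall>\<xi>\<in>Field ?W.
      \<alpha> \<xi> \<in> I \<and> \<not> X \<xi> \<subseteq> A (\<alpha> \<xi>) \<and> rank_ge I A ?W (X \<xi> \<inter> A (\<alpha> \<xi>)) \<xi>"
    by (rule bchoice[THEN exE])
  then have "\<forall>\<xi>\<in>Field ?W. \<exists>y. y \<in> X \<xi> - A (\<alpha> \<xi>)" by blast
  then obtain p where p: "\<forall>\<xi>\<in>Field ?W. p \<xi> \<in> X \<xi> - A (\<alpha> \<xi>)"
    by (rule bchoice[THEN exE])
  have "p \<xi> \<in> Field r" if "\<xi> \<in> Field ?W" for \<xi>
    using p that X[OF that] by auto
  then have "p ` Field ?W \<subseteq> Field r" by auto
  from cardSuc_cofinal_fiber[OF r this]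
  obtain y where y: "y \<in> Field r" "cofinal {\<xi> \<in> Field ?W. p \<xi> = y} ?W"
    by blast
  have "\<exists>\<xi>\<in>Field ?W. \<exists>\<alpha>\<in>I. y \<in> X \<xi> \<and> y \<notin> A \<alpha> \<and> rank_gt I A ?W (X \<xi> \<inter> A \<alpha>) \<eta>"
    if \<eta>: "\<eta> \<in> Field ?W" for \<eta>
  proof -
    obtain \<xi> where \<xi>: "\<xi> \<in> Field ?W" "p \<xi> = y" "(\<eta>, \<xi>) \<in> ?W" "\<eta> \<noteq> \<xi>"
      using y(2) \<eta> unfolding cofinal_def by blast
    have \<alpha>\<xi>: "\<alpha> \<xi> \<in> I" "rank_ge I A ?W (X \<xi> \<inter> A (\<alpha> \<xi>)) \<xi>"
      using \<alpha> \<xi>(1) by auto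
    have "rank_gt I A ?W (X \<xi> \<inter> A (\<alpha> \<xi>)) \<eta>"
      using \<alpha>\<xi>(2) \<xi>(3,4) by (rule rank_ge_imp_rank_gt)
    moreover have "y \<in> X \<xi>" "y \<notin> A (\<alpha> \<xi>)" using p \<xi>(1,2) by auto
    ultimately show ?thesis using \<xi>(1) \<alpha>\<xi>(1) by blast
  qed
  with y(1) show ?thesis by blast
qed

definition tail_separated :: "'i set \<Rightarrow> ('i \<Rightarrow> 'k set) \<Rightarrow> 'k list \<Rightarrow> 'k set \<Rightarrow> bool" where
  "tail_separated I A xs X \<longleftrightarrow> (\<forall>l<length xs. \<exists>\<gamma>\<in>I.
     xs ! l \<notin> A \<gamma> \<and> (\<forall>j. l < j \<and> j < length xs \<longrightarrow> xs ! j \<in> A \<gamma>) \<and> X \<subseteq> A \<gamma>)"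

lemma tail_separated_snoc:
  assumes sep: "tail_separated I A xs X" and y: "y \<in> X" "\<alpha> \<in> I" "y \<notin> A \<alpha>"
  shows "tail_separated I A (xs @ [y]) (X \<inter> A \<alpha>)"
  unfolding tail_separated_def
proof (intro allI impI)
  fix l assume l: "l < length (xs @ [y])"
  show "\<exists>\<gamma>\<in>I. (xs @ [y]) ! l \<notin> A \<gamma> \<and>
      (\<forall>j. l < j \<and> j < length (xs @ [y]) \<longrightarrow> (xs @ [y]) ! j \<in> A \<gamma>) \<and> X \<inter> A \<alpha> \<subseteq> A \<gamma>"
  proof (cases "l < length xs")
    case True
    then obtain \<gamma> where \<gamma>: "\<gamma> \<in> I" "xs ! l \<notin> A \<gamma>"
        "\<forall>j. l < j \<and> j < length xs \<longrightarrow> xs ! j \<in> A \<gamma>" "X \<subseteq> A \<gamma>"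
      using sep unfolding tail_separated_def by blast
    have "(xs @ [y]) ! j \<in> A \<gamma>" if "l < j" "j < length (xs @ [y])" for j
      using \<gamma>(3,4) y(1) that by (cases "j < length xs") (auto simp: nth_append)
    with True \<gamma> show ?thesis by (intro bexI[of _ \<gamma>]) (auto simp: nth_append)
  next
    case False
    with l have "l = length xs" by simp
    with y(2,3) show ?thesis by (intro bexI[of _ \<alpha>]) auto
  qed
qed

definition extendable :: "'i set \<Rightarrow> ('i \<Rightarrow> 'k set) \<Rightarrow> 'o rel \<Rightarrow> 'k set \<Rightarrow> 'k list \<Rightarrow> bool" where
  "extendable I A W K xs \<longleftrightarrow>
     set xs \<subseteq> K \<and> (\<forall>\<xi>\<in>Field W. \<exists>X\<subseteq>K. tail_separated I A xs X \<and> rank_gt I A W X \<xi>)"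

lemma extendable_Nil: "rank_ge_otype I A W K \<Longrightarrow> extendable I A W K []"
  unfolding extendable_def rank_ge_otype_def rank_gt_def tail_separated_def by auto

lemma extendable_snoc:
  fixes r :: "'k rel"
  assumes r: "Card_order r" "\<not> finite (Field r)"
    and xs: "extendable I A (cardSuc r) (Field r) xs"
  shows "\<exists>y. extendable I A (cardSuc r) (Field r) (xs @ [y])"
proof -
  let ?W = "cardSuc r"
  have "\<forall>\<xi>\<in>Field ?W. \<exists>X. X \<subseteq> Field r \<and> tail_separated I A xs X \<and> rank_gt I A ?W X \<xi>"
    using xs unfolding extendable_def by blast
  then obtain X where X: "\<forall>\<xi>\<in>Field ?W.
      X \<xi> \<subseteq> Field r \<and> tail_separated I A xs (X \<xi>) \<and> rank_gt I A ?W (X \<xi>) \<xi>"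
    by (rule bchoice[THEN exE])
  then have "\<And>\<xi>. \<xi> \<in> Field ?W \<Longrightarrow> X \<xi> \<subseteq> Field r \<and> rank_gt I A ?W (X \<xi>) \<xi>" by blast
  from rank_gt_pigeonhole[OF r this]
  obtain y where y: "y \<in> Field r" and branch: "\<forall>\<eta>\<in>Field ?W.
      \<exists>\<xi>\<in>Field ?W. \<exists>\<alpha>\<in>I. y \<in> X \<xi> \<and> y \<notin> A \<alpha> \<and> rank_gt I A ?W (X \<xi> \<inter> A \<alpha>) \<eta>"
    by blast
  have "\<exists>X'\<subseteq>Field r. tail_separated I A (xs @ [y]) X' \<and> rank_gt I A ?W X' \<eta>"
    if \<eta>: "\<eta> \<in> Field ?W" for \<eta>
  proof -
    obtain \<xi> \<alpha> where \<xi>\<alpha>: "\<xi> \<in> Field ?W" "\<alpha> \<in> I" "y \<in> X \<xi>" "y \<notin> A \<alpha>"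
        "rank_gt I A ?W (X \<xi> \<inter> A \<alpha>) \<eta>"
      using branch \<eta> by blast
    have "tail_separated I A xs (X \<xi>)" "X \<xi> \<subseteq> Field r" using X \<xi>\<alpha>(1) by auto
    then have "tail_separated I A (xs @ [y]) (X \<xi> \<inter> A \<alpha>)" "X \<xi> \<inter> A \<alpha> \<subseteq> Field r"
      using tail_separated_snoc \<xi>\<alpha>(2-4) by auto
    with \<xi>\<alpha>(5) show ?thesis by blast
  qed
  moreover have "set (xs @ [y]) \<subseteq> Field r" using xs y unfolding extendable_def by auto
  ultimately show ?thesis unfolding extendable_def by blast
qed

lemma extendable_separates:
  assumes ext: "extendable I A W K (map a [0..<Suc k])" and W: "Field W \<noteq> {}" and "l < k"
  shows "\<exists>\<gamma>\<in>I. a l \<notin> A \<gamma> \<and> (\<forall>j\<in>{l<..k}. a j \<in> A \<gamma>)"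
proof -
  obtain X where "tail_separated I A (map a [0..<Suc k]) X"
    using ext W unfolding extendable_def by blast
  moreover have "l < length (map a [0..<Suc k])" using \<open>l < k\<close> by simp
  ultimately obtain \<gamma> where "\<gamma> \<in> I" "map a [0..<Suc k] ! l \<notin> A \<gamma>"
      "\<forall>j. l < j \<and> j < Suc k \<longrightarrow> map a [0..<Suc k] ! j \<in> A \<gamma>"
    unfolding tail_separated_def by auto
  then show ?thesis using \<open>l < k\<close> by (auto simp del: upt_Suc)
qed

theorem claim2p3:
  fixes r :: "'k rel" and s :: "'i rel" and A :: "'i \<Rightarrow> 'k set"
  assumes kappa_card: "Card_order r"
    and kappa_inf: "\<not> finite (Field r)"
    and s_wo: "Well_order s"
    and A_sub: "\<forall>\<alpha>\<in>Field s. A \<alpha> \<subseteq> Field r"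
    and A_indep: "\<forall>\<alpha>\<in>Field s.
        \<not> in_gen_ideal (Field r) (A ` {\<beta>. (\<beta>, \<alpha>) \<in> s \<and> \<beta> \<noteq> \<alpha>}) (A \<alpha>)"
    and rank: "rank_ge_otype (Field s) A (cardSuc r) (Field r)"
  shows "\<exists>a :: nat \<Rightarrow> 'k. (\<forall>n. a n \<in> Field r \<and> (a n, a (Suc n)) \<in> r \<and> a n \<noteq> a (Suc n)) \<and>
           (\<forall>l k. l < k \<longrightarrow> (\<exists>\<alpha>\<in>Field s. A \<alpha> \<inter> a ` {l..k} = a ` {l<..k}))"
proof -
  let ?ext = "extendable (Field s) A (cardSuc r) (Field r)"
  obtain a where a: "\<And>n. ?ext (map a [0..<n])"
    using dependent_snoc_choice[of ?ext] extendable_Nil[OF rank]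
      extendable_snoc[OF kappa_card kappa_inf] by blast
  have "a n \<in> Field r" for n
    using a[of "Suc n"] unfolding extendable_def by auto
  then have a_in: "range a \<subseteq> Field r" by blast
  obtain f where f: "strict_mono f" "\<And>n. (a (f n), a (f (Suc n))) \<in> r"
    using Well_order_monotone_subseq[OF card_order_on_well_order_on[OF kappa_card] a_in] by blast
  have sep: "\<exists>\<gamma>\<in>Field s. a (f l) \<notin> A \<gamma> \<and> (\<forall>j\<in>{l<..k}. a (f j) \<in> A \<gamma>)"
    if "l < k" for l k
  proof -
    have "f l < f k" using strict_mono_less[OF f(1)] \<open>l < k\<close> by simp
    then obtain \<gamma> where "\<gamma> \<in> Field s" "a (f l) \<notin> A \<gamma>" "\<forall>j\<in>{f l<..f k}. a j \<in> A \<gamma>"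
      using extendable_separates[OF a Field_cardSuc_not_empty[OF kappa_card]] by blast
    then show ?thesis using strict_mono_less[OF f(1)] strict_mono_less_eq[OF f(1)] by auto
  qed
  show ?thesis
  proof (intro exI[of _ "a \<circ> f"] conjI allI impI)
    fix n
    show "(a \<circ> f) n \<in> Field r" "((a \<circ> f) n, (a \<circ> f) (Suc n)) \<in> r" using a_in f(2) by auto
    show "(a \<circ> f) n \<noteq> (a \<circ> f) (Suc n)" using sep[of n "Suc n"] by auto
  next
    fix l k :: nat assume "l < k"
    then have "{l..k} = insert l {l<..k}" by auto
    with sep[OF \<open>l < k\<close>] show "\<exists>\<alpha>\<in>Field s. A \<alpha> \<inter> (a \<circ> f) ` {l..k} = (a \<circ> f) ` {l<..k}"
      by auto
  qed
qed

end
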